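(* Let $\rho\ge0$ be a locally integrable function on $\mathbb{R}^n$, $x\in\mathbb{R}^n$, and $\mathcal{M}\rho(\sigma,x)=\int_{|x-y|\le\sigma}\rho(y)dy$. Let $\beta>1$. (i) If $n=2$, $s\in(0,1)$ and $\mathcal{M}\rho(\sigma,x)\le(\ln\sigma^{-1})^{-\beta}$ for all $\sigma\in(0,s]$, then $$\int_{|x-y|\le s}\ln^{-}|x-y|\,\rho(y)\,dy\le\Big(1+\frac{1}{\beta-1}\Big)(\ln s^{-1})^{1-\beta}.$$ (ii) If $n=3$ and $\mathcal{M}\rho(\sigma,x)\le\sigma^{\beta}$ for all $\sigma\in(0,s]$, then $$\int_{|x-y|\le s}|x-y|^{-1}\rho(y)\,dy\le\Big(1+\frac{1}{\beta-1}\Big)s^{\beta-1}.$$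
   Context: $\ln^{-}(t)=-\ln\min\{t,1\}$. *)

theory Defs
  imports "HOL-Analysis.Analysis"
begin

definition lnminus :: "real \<Rightarrow> real" where
  "lnminus t = - ln (min t 1)"

definition locally_integrable :: "('a::euclidean_space \<Rightarrow> real) \<Rightarrow> bool" where
  "locally_integrable f \<longleftrightarrow> (\<forall>c r. set_integrable lborel (cball c r) f)"

definition ball_mass :: "('a::euclidean_space \<Rightarrow> real) \<Rightarrow> real \<Rightarrow> 'a \<Rightarrow> ennreal" where
  "ball_mass \<rho> \<sigma> x = (\<integral>\<^sup>+ y. ennreal (indicator (cball x \<sigma>) y * \<rho> y) \<partial>lborel)"

end

theory Submission imports Defs begin

text \<open>Layer-cake argument. If the radial profile g vanishes at 0 and
  g(d) = g(s) + int_d^s h(t) dt, then by Tonelli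
  int_{|x-y| <= s} g(|x-y|) rho(y) dy <= g(s) M(s,x) + int_0^s h(t) M(t,x) dt,
  so a bound M(t,x) <= B(t) reduces the claim to the one-dimensional integral of h B.
  For ln^- take h(t) = 1/t and B(t) = (ln 1/t)^(-beta); for 1/r take h(t) = 1/t^2 and
  B(t) = t^beta. The resulting integrals have the antiderivatives (ln 1/t)^(1-beta)/(beta-1)
  and t^(beta-1)/(beta-1), both bounded below by 0.\<close>

lemma nn_integral_Ioc_le_antiderivative:
  fixes f F :: "real \<Rightarrow> real"
  assumes s: "0 < s"
    and f_meas[measurable]: "f \<in> borel_measurable borel"
    and f_nonneg: "\<And>t. 0 < t \<Longrightarrow> t \<le> s \<Longrightarrow> 0 \<le> f t"
    and F_deriv: "\<And>t. 0 < t \<Longrightarrow> t \<le> s \<Longrightarrow> (F has_real_derivative f t) (at t)"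
    and F_lower: "\<And>t. 0 < t \<Longrightarrow> t \<le> s \<Longrightarrow> C \<le> F t"
  shows "(\<integral>\<^sup>+t. ennreal (f t) * indicator {0<..s} t \<partial>lborel) \<le> ennreal (F s - C)"
proof -
  define a where "a i = s / real (Suc i)" for i
  have a_pos: "0 < a i" and a_Suc: "a (Suc i) \<le> a i" for i
    using s by (simp_all add: a_def frac_le)
  have a_le: "a i \<le> s" for i
    using s by (simp add: a_def divide_le_eq)
  define G where "G i t = ennreal (f t) * indicator {a i..s} t" for i t
  have G_inc: "incseq G"
  proof (intro incseq_SucI le_funI)
    show "G i t \<le> G (Suc i) t" for i t
      using a_Suc[of i] by (auto simp: G_def indicator_def)
  qed
  have G_meas: "G i \<in> borel_measurable lborel" for i
    unfolding G_def by measurable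
  have G_SUP: "(SUP i. G i t) = ennreal (f t) * indicator {0<..s} t" for t
  proof (cases "0 < t \<and> t \<le> s")
    case True
    obtain n where n: "s / t < real n" using reals_Archimedean2 by blast
    have "a n \<le> t"
      using True n s by (simp add: a_def divide_le_eq pos_divide_less_eq mult.commute distrib_left)
    then have "G n t = ennreal (f t)" using True by (simp add: G_def)
    moreover have "G i t \<le> ennreal (f t)" for i by (simp add: G_def indicator_def)
    ultimately show ?thesis
      using True by (simp add: antisym SUP_least SUP_upper2[of n])
  next
    case False
    then have "G i t = 0" for i
      using a_pos[of i] by (auto simp: G_def indicator_def)
    then show ?thesis using False by simp
  qed
  have G_integral: "integral\<^sup>N lborel (G i) = ennreal (F s - F (a i))" for i
    unfolding G_def
    by (rule nn_integral_FTC_Icc) (use a_pos[of i] a_le[of i] in \<open>auto intro!: F_deriv f_nonneg\<close>)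
  have "(\<integral>\<^sup>+t. ennreal (f t) * indicator {0<..s} t \<partial>lborel) = (SUP i. integral\<^sup>N lborel (G i))"
    using nn_integral_monotone_convergence_SUP[OF G_inc G_meas] by (simp add: G_SUP)
  also have "\<dots> \<le> ennreal (F s - C)"
    using F_lower[OF a_pos a_le] by (auto simp: G_integral intro!: SUP_least ennreal_leI)
  finally show ?thesis .
qed

lemma borel_measurable_indicator_cball_radius:
  fixes x :: "'a::euclidean_space"
  shows "(\<lambda>p :: real \<times> 'a. indicator (cball x (fst p)) (snd p) :: real)
           \<in> borel_measurable (lborel \<Otimes>\<^sub>M lborel)"
proof -
  have "(\<lambda>p :: real \<times> 'a. indicator (cball x (fst p)) (snd p) :: real)
          = indicator {p. dist x (snd p) \<le> fst p}"
    by (auto simp: indicator_def mem_cball)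
  moreover have "{p :: real \<times> 'a. dist x (snd p) \<le> fst p} \<in> sets borel"
    by (intro borel_closed closed_Collect_le continuous_intros)
  ultimately show ?thesis
    by (simp add: lborel_prod measurable_lborel1)
qed

lemma nn_integral_radial_le_layer_cake:
  fixes \<rho> :: "'a::euclidean_space \<Rightarrow> real" and g h :: "real \<Rightarrow> real"
  assumes \<rho>_nonneg: "\<And>y. 0 \<le> \<rho> y"
    and \<rho>_meas[measurable]: "(\<lambda>y. indicator (cball x s) y * \<rho> y) \<in> borel_measurable lborel"
    and h_meas[measurable]: "h \<in> borel_measurable borel"
    and h_nonneg: "\<And>t. 0 < t \<Longrightarrow> 0 \<le> h t"
    and g_0: "g 0 = 0"
    and g_s: "0 \<le> g s"
    and g_eq: "\<And>d. 0 < d \<Longrightarrow> d \<le> s \<Longrightarrow>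
       ennreal (g d) = ennreal (g s) + (\<integral>\<^sup>+t. ennreal (h t) * indicator {d..s} t \<partial>lborel)"
  shows "(\<integral>\<^sup>+ y. ennreal (indicator (cball x s) y * g (dist x y) * \<rho> y) \<partial>lborel)
          \<le> ennreal (g s) * ball_mass \<rho> s x
             + (\<integral>\<^sup>+t. ennreal (h t) * ball_mass \<rho> t x * indicator {0<..s} t \<partial>lborel)"
proof -
  define \<rho>' where "\<rho>' y = indicator (cball x s) y * \<rho> y" for y
  have \<rho>'_meas[measurable]: "\<rho>' \<in> borel_measurable lborel"
    using \<rho>_meas by (simp add: \<rho>'_def[abs_def])
  define C where "C y t = ennreal (h t * indicator {0<..s} t) * ennreal (indicator (cball x t) y * \<rho>' y)"
    for y t
  have C_meas: "(\<lambda>(t, y). C y t) \<in> borel_measurable (lborel \<Otimes>\<^sub>M lborel)"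
    using borel_measurable_indicator_cball_radius[of x, measurable]
    unfolding C_def split_beta' by measurable
  have C_y_meas: "(\<lambda>y. \<integral>\<^sup>+t. C y t \<partial>lborel) \<in> borel_measurable lborel"
    using lborel.borel_measurable_nn_integral_fst[OF measurable_pair_swap[OF C_meas]]
    by (simp add: split_beta')
  \<comment> \<open>Only an inequality: at the centre y = x the left side is g 0 = 0.\<close>
  have pointwise: "ennreal (indicator (cball x s) y * g (dist x y) * \<rho> y)
      \<le> ennreal (g s) * ennreal (\<rho>' y) + (\<integral>\<^sup>+t. C y t \<partial>lborel)" for y
  proof (cases "y \<in> cball x s \<and> y \<noteq> x")
    case False
    then have "indicator (cball x s) y * g (dist x y) * \<rho> y = 0"
      using g_0 by (auto simp: indicator_def)
    then show ?thesis by (simp only:) simp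
  next
    case True
    define d where "d = dist x y"
    have d: "0 < d" "d \<le> s" using True by (auto simp: d_def mem_cball)
    have \<rho>'_y: "\<rho>' y = \<rho> y" using True by (simp add: \<rho>'_def)
    have "C y t = ennreal (h t) * indicator {d..s} t * ennreal (\<rho> y)" for t
      using d h_nonneg[of t] \<rho>_nonneg[of y]
      by (auto simp: C_def \<rho>'_y indicator_def mem_cball d_def[symmetric] ennreal_mult')
    then have "(\<integral>\<^sup>+t. C y t \<partial>lborel)
        = (\<integral>\<^sup>+t. ennreal (h t) * indicator {d..s} t \<partial>lborel) * ennreal (\<rho> y)"
      by (simp add: nn_integral_multc)
    moreover have "ennreal (indicator (cball x s) y * g (dist x y) * \<rho> y) = ennreal (g d) * ennreal (\<rho> y)"
      using True \<rho>_nonneg ennreal_mult'[of "\<rho> y" "g d"] by (simp add: d_def mult.commute)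
    ultimately show ?thesis
      by (simp add: g_eq[OF d] distrib_right \<rho>'_y)
  qed
  have inner: "(\<integral>\<^sup>+y. C y t \<partial>lborel) = ennreal (h t) * ball_mass \<rho> t x * indicator {0<..s} t" for t
  proof (cases "0 < t \<and> t \<le> s")
    case True
    have "(\<integral>\<^sup>+y. C y t \<partial>lborel) = ennreal (h t) * (\<integral>\<^sup>+y. ennreal (indicator (cball x t) y * \<rho>' y) \<partial>lborel)"
      using True by (simp add: C_def) (intro nn_integral_cmult measurable_compose[OF _ measurable_ennreal]
          borel_measurable_times borel_measurable_indicator \<rho>'_meas, simp)
    also have "(\<integral>\<^sup>+y. ennreal (indicator (cball x t) y * \<rho>' y) \<partial>lborel) = ball_mass \<rho> t x"
      unfolding ball_mass_def
      by (rule nn_integral_cong) (use True in \<open>auto simp: \<rho>'_def indicator_def mem_cball\<close>)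
    finally show ?thesis using True by simp
  qed (auto simp: C_def)
  have "(\<integral>\<^sup>+ y. ennreal (indicator (cball x s) y * g (dist x y) * \<rho> y) \<partial>lborel)
      \<le> (\<integral>\<^sup>+ y. ennreal (g s) * ennreal (\<rho>' y) + (\<integral>\<^sup>+t. C y t \<partial>lborel) \<partial>lborel)"
    by (rule nn_integral_mono) (rule pointwise)
  also have "\<dots> = ennreal (g s) * (\<integral>\<^sup>+ y. ennreal (\<rho>' y) \<partial>lborel)
                  + (\<integral>\<^sup>+ y. \<integral>\<^sup>+t. C y t \<partial>lborel \<partial>lborel)"
    using C_y_meas by (subst nn_integral_add) (auto simp: nn_integral_cmult)
  also have "(\<integral>\<^sup>+ y. \<integral>\<^sup>+t. C y t \<partial>lborel \<partial>lborel) = (\<integral>\<^sup>+ t. \<integral>\<^sup>+y. C y t \<partial>lborel \<partial>lborel)"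
    using lborel_pair.Fubini'[OF C_meas] by simp
  also have "(\<integral>\<^sup>+ y. ennreal (\<rho>' y) \<partial>lborel) = ball_mass \<rho> s x"
    by (simp add: ball_mass_def \<rho>'_def)
  finally show ?thesis by (simp add: inner)
qed


lemma nn_integral_radial_le:
  fixes \<rho> :: "'a::euclidean_space \<Rightarrow> real" and g h B :: "real \<Rightarrow> real"
  assumes s: "0 < s"
    and \<rho>_nonneg: "\<And>y. 0 \<le> \<rho> y"
    and \<rho>_meas: "(\<lambda>y. indicator (cball x s) y * \<rho> y) \<in> borel_measurable lborel"
    and h_meas: "h \<in> borel_measurable borel"
    and h_nonneg: "\<And>t. 0 < t \<Longrightarrow> 0 \<le> h t"
    and g_0: "g 0 = 0"
    and g_s: "0 \<le> g s"
    and g_eq: "\<And>d. 0 < d \<Longrightarrow> d \<le> s \<Longrightarrow>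
       ennreal (g d) = ennreal (g s) + (\<integral>\<^sup>+t. ennreal (h t) * indicator {d..s} t \<partial>lborel)"
    and mass: "\<And>\<sigma>. 0 < \<sigma> \<Longrightarrow> \<sigma> \<le> s \<Longrightarrow> ball_mass \<rho> \<sigma> x \<le> ennreal (B \<sigma>)"
    and B_nonneg: "\<And>t. 0 < t \<Longrightarrow> 0 \<le> B t"
    and hB_integral: "(\<integral>\<^sup>+t. ennreal (h t * B t) * indicator {0<..s} t \<partial>lborel) \<le> ennreal K"
    and K: "0 \<le> K"
  shows "(\<integral>\<^sup>+ y. ennreal (indicator (cball x s) y * g (dist x y) * \<rho> y) \<partial>lborel)
          \<le> ennreal (g s * B s + K)"
proof -
  have "(\<integral>\<^sup>+t. ennreal (h t) * ball_mass \<rho> t x * indicator {0<..s} t \<partial>lborel)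
      \<le> (\<integral>\<^sup>+t. ennreal (h t * B t) * indicator {0<..s} t \<partial>lborel)"
    using mass h_nonneg B_nonneg
    by (intro nn_integral_mono) (auto simp: indicator_def ennreal_mult' intro: mult_left_mono)
  also note hB_integral
  finally have "(\<integral>\<^sup>+ y. ennreal (indicator (cball x s) y * g (dist x y) * \<rho> y) \<partial>lborel)
      \<le> ennreal (g s) * ennreal (B s) + ennreal K"
    using nn_integral_radial_le_layer_cake[OF \<rho>_nonneg \<rho>_meas h_meas h_nonneg g_0 g_s g_eq]
      mass[OF s order.refl]
    by (meson add_mono mult_left_mono order_trans zero_le)
  also have "\<dots> = ennreal (g s * B s + K)"
    using g_s B_nonneg[OF s] K by (simp add: ennreal_mult' ennreal_plus)
  finally show ?thesis .
qed

lemma has_real_derivative_neg_ln_powr: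
  assumes "\<beta> \<noteq> 1" and "0 < t" "t < 1"
  shows "((\<lambda>t. (- ln t) powr (1 - \<beta>) / (\<beta> - 1)) has_real_derivative 1 / t * ln (1 / t) powr (- \<beta>)) (at t)"
proof -
  have "((\<lambda>t. (- ln t) powr (1 - \<beta>) / (\<beta> - 1)) has_real_derivative
          (1 - \<beta>) * (- ln t) powr (1 - \<beta> - of_nat 1) * (- (1 / t)) / (\<beta> - 1)) (at t)"
    using assms by (intro DERIV_cdivide DERIV_fun_powr) (auto intro!: derivative_eq_intros)
  moreover have "(1 - \<beta>) * (- ln t) powr (1 - \<beta> - of_nat 1) * (- (1 / t)) / (\<beta> - 1)
      = 1 / t * ln (1 / t) powr (- \<beta>)"
    using assms by (simp add: ln_div field_simps)
  ultimately show ?thesis by simp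
qed

lemma has_real_derivative_powr_div:
  assumes "\<beta> \<noteq> 1" and "0 < t"
  shows "((\<lambda>t. t powr (\<beta> - 1) / (\<beta> - 1)) has_real_derivative 1 / t\<^sup>2 * t powr \<beta>) (at t)"
proof -
  have "((\<lambda>t. t powr (\<beta> - 1) / (\<beta> - 1)) has_real_derivative (\<beta> - 1) * t powr (\<beta> - 1 - 1) / (\<beta> - 1)) (at t)"
    using assms by (intro DERIV_cdivide has_real_derivative_powr)
  moreover have "(\<beta> - 1) * t powr (\<beta> - 1 - 1) / (\<beta> - 1) = 1 / t\<^sup>2 * t powr \<beta>"
    using assms by (simp add: powr_diff power2_eq_square)
  ultimately show ?thesis by simp
qed

lemma locally_integrable_imp_indicator_cball_measurable:
  assumes "locally_integrable (\<rho> :: 'a::euclidean_space \<Rightarrow> real)"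
  shows "(\<lambda>y. indicator (cball x s) y * \<rho> y) \<in> borel_measurable lborel"
proof -
  have "set_integrable lborel (cball x s) \<rho>"
    using assms by (simp add: locally_integrable_def)
  then show ?thesis
    unfolding set_integrable_def by (simp add: borel_measurable_integrable)
qed

lemma nn_integral_lnminus_dist_le:
  fixes \<rho> :: "'a::euclidean_space \<Rightarrow> real"
  assumes \<beta>: "1 < \<beta>" and \<rho>_nonneg: "\<And>y. 0 \<le> \<rho> y" and \<rho>_loc: "locally_integrable \<rho>"
    and s: "0 < s" "s < 1"
    and mass: "\<And>\<sigma>. 0 < \<sigma> \<Longrightarrow> \<sigma> \<le> s \<Longrightarrow> ball_mass \<rho> \<sigma> x \<le> ennreal (ln (1 / \<sigma>) powr (- \<beta>))"
  shows "(\<integral>\<^sup>+ y. ennreal (indicator (cball x s) y * lnminus (dist x y) * \<rho> y) \<partial>lborel)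
         \<le> ennreal ((1 + 1 / (\<beta> - 1)) * ln (1 / s) powr (1 - \<beta>))"
proof -
  have lnminus_eq: "lnminus d = - ln d" if "0 < d" "d \<le> s" for d
    using that s by (simp add: lnminus_def)
  have "(\<integral>\<^sup>+ y. ennreal (indicator (cball x s) y * lnminus (dist x y) * \<rho> y) \<partial>lborel)
     \<le> ennreal (lnminus s * ln (1 / s) powr (- \<beta>) + (- ln s) powr (1 - \<beta>) / (\<beta> - 1))"
  proof (rule nn_integral_radial_le[where h = "\<lambda>t. 1 / t"])
    fix d assume d: "0 < d" "d \<le> s"
    have "(\<integral>\<^sup>+t. ennreal (1 / t) * indicator {d..s} t \<partial>lborel) = ennreal (ln s - ln d)"
      by (rule nn_integral_FTC_Icc) (use d in \<open>auto intro!: derivative_eq_intros\<close>)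
    then show "ennreal (lnminus d) = ennreal (lnminus s) + (\<integral>\<^sup>+t. ennreal (1 / t) * indicator {d..s} t \<partial>lborel)"
      using d s by (simp add: lnminus_eq ennreal_plus[symmetric] del: ennreal_plus)
  next
    show "(\<integral>\<^sup>+t. ennreal (1 / t * ln (1 / t) powr (- \<beta>)) * indicator {0<..s} t \<partial>lborel)
       \<le> ennreal ((- ln s) powr (1 - \<beta>) / (\<beta> - 1))"
      using \<beta> s has_real_derivative_neg_ln_powr[of \<beta>]
      by (intro nn_integral_Ioc_le_antiderivative[where F = "\<lambda>t. (- ln t) powr (1 - \<beta>) / (\<beta> - 1)" and C = 0, simplified])
        auto
  qed (use s \<beta> mass \<rho>_nonneg locally_integrable_imp_indicator_cball_measurable[OF \<rho>_loc] lnminus_eq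
       in \<open>auto simp: lnminus_def\<close>)
  also have "lnminus s * ln (1 / s) powr (- \<beta>) + (- ln s) powr (1 - \<beta>) / (\<beta> - 1)
      = (1 + 1 / (\<beta> - 1)) * ln (1 / s) powr (1 - \<beta>)"
  proof -
    have "ln (1 / s) * ln (1 / s) powr (- \<beta>) = ln (1 / s) powr (1 - \<beta>)"
      using s by (simp add: powr_add[of _ 1 "- \<beta>", simplified])
    then show ?thesis
      using s \<beta> by (simp add: lnminus_eq ln_div field_simps)
  qed
  finally show ?thesis .
qed

lemma nn_integral_inverse_dist_le:
  fixes \<rho> :: "'a::euclidean_space \<Rightarrow> real"
  assumes \<beta>: "1 < \<beta>" and \<rho>_nonneg: "\<And>y. 0 \<le> \<rho> y" and \<rho>_loc: "locally_integrable \<rho>"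
    and s: "0 < s"
    and mass: "\<And>\<sigma>. 0 < \<sigma> \<Longrightarrow> \<sigma> \<le> s \<Longrightarrow> ball_mass \<rho> \<sigma> x \<le> ennreal (\<sigma> powr \<beta>)"
  shows "(\<integral>\<^sup>+ y. ennreal (indicator (cball x s) y * inverse (dist x y) * \<rho> y) \<partial>lborel)
         \<le> ennreal ((1 + 1 / (\<beta> - 1)) * s powr (\<beta> - 1))"
proof -
  have "(\<integral>\<^sup>+ y. ennreal (indicator (cball x s) y * inverse (dist x y) * \<rho> y) \<partial>lborel)
     \<le> ennreal (inverse s * s powr \<beta> + s powr (\<beta> - 1) / (\<beta> - 1))"
  proof (rule nn_integral_radial_le[where h = "\<lambda>t. 1 / t\<^sup>2"])
    fix d assume d: "0 < d" "d \<le> s"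
    have "(\<integral>\<^sup>+t. ennreal (1 / t\<^sup>2) * indicator {d..s} t \<partial>lborel) = ennreal (- inverse s - - inverse d)"
      by (rule nn_integral_FTC_Icc)
        (use d in \<open>auto intro!: derivative_eq_intros simp: power2_eq_square field_simps\<close>)
    then show "ennreal (inverse d) = ennreal (inverse s) + (\<integral>\<^sup>+t. ennreal (1 / t\<^sup>2) * indicator {d..s} t \<partial>lborel)"
      using d s by (simp add: ennreal_plus[symmetric] le_imp_inverse_le del: ennreal_plus)
  next
    show "(\<integral>\<^sup>+t. ennreal (1 / t\<^sup>2 * t powr \<beta>) * indicator {0<..s} t \<partial>lborel)
       \<le> ennreal (s powr (\<beta> - 1) / (\<beta> - 1))"
      using \<beta> s has_real_derivative_powr_div[of \<beta>]
      by (intro nn_integral_Ioc_le_antiderivative[where F = "\<lambda>t. t powr (\<beta> - 1) / (\<beta> - 1)" and C = 0, simplified])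
        auto
  qed (use s \<beta> mass \<rho>_nonneg locally_integrable_imp_indicator_cball_measurable[OF \<rho>_loc] in auto)
  also have "inverse s * s powr \<beta> + s powr (\<beta> - 1) / (\<beta> - 1) = (1 + 1 / (\<beta> - 1)) * s powr (\<beta> - 1)"
    using s \<beta> by (simp add: powr_diff field_simps)
  finally show ?thesis .
qed

theorem lemma2p1:
  fixes \<beta> :: real
  assumes "\<beta> > 1"
  shows
   "(\<forall>(\<rho> :: real^2 \<Rightarrow> real) (x :: real^2) (s :: real).
       (\<forall>y. \<rho> y \<ge> 0) \<longrightarrow> locally_integrable \<rho> \<longrightarrow> 0 < s \<longrightarrow> s < 1 \<longrightarrow>
       (\<forall>\<sigma>. 0 < \<sigma> \<and> \<sigma> \<le> s \<longrightarrow> ball_mass \<rho> \<sigma> x \<le> ennreal ((ln (1 / \<sigma>)) powr (- \<beta>))) \<longrightarrow>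
       (\<integral>\<^sup>+ y. ennreal (indicator (cball x s) y * lnminus (dist x y) * \<rho> y) \<partial>lborel)
         \<le> ennreal ((1 + 1 / (\<beta> - 1)) * (ln (1 / s)) powr (1 - \<beta>)))
    \<and>
    (\<forall>(\<rho> :: real^3 \<Rightarrow> real) (x :: real^3) (s :: real).
       (\<forall>y. \<rho> y \<ge> 0) \<longrightarrow> locally_integrable \<rho> \<longrightarrow> 0 < s \<longrightarrow>
       (\<forall>\<sigma>. 0 < \<sigma> \<and> \<sigma> \<le> s \<longrightarrow> ball_mass \<rho> \<sigma> x \<le> ennreal (\<sigma> powr \<beta>)) \<longrightarrow>
       (\<integral>\<^sup>+ y. ennreal (indicator (cball x s) y * inverse (dist x y) * \<rho> y) \<partial>lborel)
         \<le> ennreal ((1 + 1 / (\<beta> - 1)) * s powr (\<beta> - 1)))"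
  using nn_integral_lnminus_dist_le[OF assms] nn_integral_inverse_dist_le[OF assms] by blast

end
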